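(* Let $(\bar u,\bar v;\mu)$ and $(\bar u',\bar v';\mu')$ be two stable outcomes of a non-degenerate RiFle assignment game. Suppose $p_i\stackrel{\mu}{\longleftrightarrow}q_j$, $u_i=u'_i$ (so $p_i$ is indifferent between the two outcomes) and $v_j>v'_j$ (so $q_j$ strictly prefers $\mu$). Then $q_j$ is rigid. Symmetrically, if $p_i\stackrel{\mu}{\longleftrightarrow}q_j$, $v_j=v'_j$ and $u_i>u'_i$, then $p_i$ is rigid. (That is, an agent indifferent between the two outcomes cannot be preferred by a flexible agent.)
   Context: A RiFle assignment game consists of two disjoint sets of agents $P=\{p_1,\dots,p_n\}$ and $Q=\{q_1,\dots,q_n\}$, a pair of nonnegative real numbers $(\beta_{ij},\gamma_{ij})$ for every pair $(p_i,q_j)\in P\times Q$ (write $\alpha_{ij}=\beta_{ij}+\gamma_{ij}$), and a designation of every agent as rigid or flexible. Let $\mathcal R$ be the set of pairs with at least one rigid agent and $\mathcal F$ the set of pairs with both agents flexible. An outcome $(\bar u,\bar v;\mu)$ consists of a matching $\mu$ between $P$ and $Q$ (write $p_i\stackrel{\mu}{\longleftrightarrow} q_j$) and payoff vectors $\bar u,\bar v\in\mathbb R^n$. It is feasible if: (1) $u_i\ge0$, $v_j\ge0$; (2) if a rigid $p_i$ is matched to $q_j$ then $u_i=\beta_{ij}$ and, if $q_j$ is flexible, $v_j\ge\gamma_{ij}$; symmetrically for a rigid $q_j$ matched to $p_i$: $v_j=\gamma_{ij}$ and, if $p_i$ is flexible, $u_i\ge\beta_{ij}$; (3) $\sum_iu_i+\sum_jv_j=\sum_{p_i\stackrel{\mu}{\longleftrightarrow}q_j}\alpha_{ij}$.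 It is stable if feasible and $u_i+v_j\ge\alpha_{ij}$ for $(p_i,q_j)\in\mathcal F$ and ($u_i\ge\beta_{ij}$ or $v_j\ge\gamma_{ij}$) for $(p_i,q_j)\in\mathcal R$. Reservation prices are modeled by rigid dummy agents; for the following definition an agent left unmatched by a matching is regarded as matched to a rigid dummy agent. Given a coalition $C\subseteq P\cup Q$ and a matching $\mu$, the total payoff to $C$ under $\mu$ is forced if every pair matched under $\mu$ with one agent in $C$ and the other outside $C$ contains a rigid agent; the forced payoff is then $\sum_{p_i\in C,\ p_i\stackrel{\mu}{\longleftrightarrow}q_j}\beta_{ij}+\sum_{q_j\in C,\ p_i\stackrel{\mu}{\longleftrightarrow}q_j}\gamma_{ij}$. The game is non-degenerate if for any two matchings $\mu,\mu'$: whenever $C$ is a minimal coalition such that the payoff to $C$ is forced under both $\mu$ and $\mu'$, and the two forced payoffs are equal, then $\mu$ and $\mu'$ coincide on $C$. *)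

theory Defs
  imports Complex_Main
begin

text \<open>Agents p_0..p_{n-1} and q_0..q_{n-1} are indexed by {..<n}.
  beta i j, gamma i j are the pair values; rP i / rQ j say whether p_i / q_j is rigid.
  A matching is a perfect matching, i.e. a bijection sigma of {..<n}: p_i is matched to q_(sigma i).
  Payoffs u, v are functions nat => real (only indices below n matter).\<close>

definition rifle_game :: "nat \<Rightarrow> (nat \<Rightarrow> nat \<Rightarrow> real) \<Rightarrow> (nat \<Rightarrow> nat \<Rightarrow> real) \<Rightarrow> bool" where
  "rifle_game n beta gamma \<longleftrightarrow> (\<forall>i<n. \<forall>j<n. 0 \<le> beta i j \<and> 0 \<le> gamma i j)"

definition is_matching :: "nat \<Rightarrow> (nat \<Rightarrow> nat) \<Rightarrow> bool" where
  "is_matching n \<sigma> \<longleftrightarrow> bij_betw \<sigma> {..<n} {..<n}"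

definition partnerQ :: "nat \<Rightarrow> (nat \<Rightarrow> nat) \<Rightarrow> nat \<Rightarrow> nat" where
  "partnerQ n \<sigma> j = inv_into {..<n} \<sigma> j"

definition feasible ::
  "nat \<Rightarrow> (nat \<Rightarrow> nat \<Rightarrow> real) \<Rightarrow> (nat \<Rightarrow> nat \<Rightarrow> real) \<Rightarrow> (nat \<Rightarrow> bool) \<Rightarrow> (nat \<Rightarrow> bool)
   \<Rightarrow> (nat \<Rightarrow> real) \<Rightarrow> (nat \<Rightarrow> real) \<Rightarrow> (nat \<Rightarrow> nat) \<Rightarrow> bool" where
  "feasible n beta gamma rP rQ u v \<sigma> \<longleftrightarrow>
     is_matching n \<sigma> \<and>
     (\<forall>i<n. 0 \<le> u i) \<and> (\<forall>j<n. 0 \<le> v j) \<and>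
     (\<forall>i<n. rP i \<longrightarrow> u i = beta i (\<sigma> i) \<and> (\<not> rQ (\<sigma> i) \<longrightarrow> v (\<sigma> i) \<ge> gamma i (\<sigma> i))) \<and>
     (\<forall>i<n. rQ (\<sigma> i) \<longrightarrow> v (\<sigma> i) = gamma i (\<sigma> i) \<and> (\<not> rP i \<longrightarrow> u i \<ge> beta i (\<sigma> i))) \<and>
     (\<Sum>i<n. u i) + (\<Sum>j<n. v j) = (\<Sum>i<n. beta i (\<sigma> i) + gamma i (\<sigma> i))"

definition stable ::
  "nat \<Rightarrow> (nat \<Rightarrow> nat \<Rightarrow> real) \<Rightarrow> (nat \<Rightarrow> nat \<Rightarrow> real) \<Rightarrow> (nat \<Rightarrow> bool) \<Rightarrow> (nat \<Rightarrow> bool)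
   \<Rightarrow> (nat \<Rightarrow> real) \<Rightarrow> (nat \<Rightarrow> real) \<Rightarrow> (nat \<Rightarrow> nat) \<Rightarrow> bool" where
  "stable n beta gamma rP rQ u v \<sigma> \<longleftrightarrow>
     feasible n beta gamma rP rQ u v \<sigma> \<and>
     (\<forall>i<n. \<forall>j<n. \<not> rP i \<and> \<not> rQ j \<longrightarrow> u i + v j \<ge> beta i j + gamma i j) \<and>
     (\<forall>i<n. \<forall>j<n. rP i \<or> rQ j \<longrightarrow> u i \<ge> beta i j \<or> v j \<ge> gamma i j)"

definition coalition :: "nat \<Rightarrow> nat set \<Rightarrow> nat set \<Rightarrow> bool" where
  "coalition n CP CQ \<longleftrightarrow> CP \<subseteq> {..<n} \<and> CQ \<subseteq> {..<n}"

definition forced :: "nat \<Rightarrow> (nat \<Rightarrow> bool) \<Rightarrow> (nat \<Rightarrow> bool) \<Rightarrow> (nat \<Rightarrow> nat) \<Rightarrow> nat set \<Rightarrow> nat set \<Rightarrow> bool" where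
  "forced n rP rQ \<sigma> CP CQ \<longleftrightarrow>
     (\<forall>i<n. (i \<in> CP) \<noteq> (\<sigma> i \<in> CQ) \<longrightarrow> rP i \<or> rQ (\<sigma> i))"

definition forced_payoff ::
  "nat \<Rightarrow> (nat \<Rightarrow> nat \<Rightarrow> real) \<Rightarrow> (nat \<Rightarrow> nat \<Rightarrow> real) \<Rightarrow> (nat \<Rightarrow> nat) \<Rightarrow> nat set \<Rightarrow> nat set \<Rightarrow> real" where
  "forced_payoff n beta gamma \<sigma> CP CQ =
     (\<Sum>i\<in>CP. beta i (\<sigma> i)) + (\<Sum>j\<in>CQ. gamma (partnerQ n \<sigma> j) j)"

definition minimal_forced_both ::
  "nat \<Rightarrow> (nat \<Rightarrow> bool) \<Rightarrow> (nat \<Rightarrow> bool) \<Rightarrow> (nat \<Rightarrow> nat) \<Rightarrow> (nat \<Rightarrow> nat) \<Rightarrow> nat set \<Rightarrow> nat set \<Rightarrow> bool" where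
  "minimal_forced_both n rP rQ \<sigma> \<sigma>' CP CQ \<longleftrightarrow>
     coalition n CP CQ \<and> (CP \<noteq> {} \<or> CQ \<noteq> {}) \<and>
     forced n rP rQ \<sigma> CP CQ \<and> forced n rP rQ \<sigma>' CP CQ \<and>
     (\<forall>DP DQ. DP \<subseteq> CP \<and> DQ \<subseteq> CQ \<and> (DP \<noteq> {} \<or> DQ \<noteq> {}) \<and> (DP, DQ) \<noteq> (CP, CQ) \<longrightarrow>
        \<not> (forced n rP rQ \<sigma> DP DQ \<and> forced n rP rQ \<sigma>' DP DQ))"

definition coincide_on :: "nat \<Rightarrow> (nat \<Rightarrow> nat) \<Rightarrow> (nat \<Rightarrow> nat) \<Rightarrow> nat set \<Rightarrow> nat set \<Rightarrow> bool" where
  "coincide_on n \<sigma> \<sigma>' CP CQ \<longleftrightarrow>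
     (\<forall>i\<in>CP. \<sigma> i = \<sigma>' i) \<and> (\<forall>j\<in>CQ. partnerQ n \<sigma> j = partnerQ n \<sigma>' j)"

definition nondegenerate ::
  "nat \<Rightarrow> (nat \<Rightarrow> nat \<Rightarrow> real) \<Rightarrow> (nat \<Rightarrow> nat \<Rightarrow> real) \<Rightarrow> (nat \<Rightarrow> bool) \<Rightarrow> (nat \<Rightarrow> bool) \<Rightarrow> bool" where
  "nondegenerate n beta gamma rP rQ \<longleftrightarrow>
     (\<forall>\<sigma> \<sigma>' CP CQ. is_matching n \<sigma> \<and> is_matching n \<sigma>' \<and>
        minimal_forced_both n rP rQ \<sigma> \<sigma>' CP CQ \<and>
        forced_payoff n beta gamma \<sigma> CP CQ = forced_payoff n beta gamma \<sigma>' CP CQ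
        \<longrightarrow> coincide_on n \<sigma> \<sigma>' CP CQ)"

end

theory Submission
  imports Defs
begin

text \<open>In a stable outcome every matched pair (p, q) splits exactly its value alpha(p, q):
  stability gives each matched pair at least its value, and feasibility says the totals agree.
  Suppose p = p_i, matched to q = q_j under mu, is indifferent and q is flexible. If p is
  flexible too, stability of mu' on the pair (p, q) gives u'(p) + v'(q) >= alpha(p, q) =
  u(p) + v(q). If p is rigid, the singleton {p} is a minimal coalition whose forced payoff
  u(p) = u'(p) is the same under both matchings, so by non-degeneracy p keeps its partner q
  under mu', and again u'(p) + v'(q) = alpha(p, q). Either way q cannot strictly prefer mu.
  The second claim is symmetric, using the coalition {q}.\<close>

lemma stable_is_matching: "stable n \<beta> \<gamma> rP rQ u v \<sigma> \<Longrightarrow> is_matching n \<sigma>"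
  by (simp add: stable_def feasible_def)

lemma is_matching_lt: "is_matching n \<sigma> \<Longrightarrow> i < n \<Longrightarrow> \<sigma> i < n"
  by (auto simp: is_matching_def bij_betw_def)

lemma partnerQ_lt:
  assumes "is_matching n \<sigma>" and "j < n"
  shows "partnerQ n \<sigma> j < n"
  using assms unfolding is_matching_def partnerQ_def bij_betw_def
  by (metis inv_into_into lessThan_iff)

lemma matched_partnerQ:
  assumes "is_matching n \<sigma>" and "j < n"
  shows "\<sigma> (partnerQ n \<sigma> j) = j"
  using assms by (auto simp: is_matching_def partnerQ_def bij_betw_def intro: f_inv_into_f)

lemma partnerQ_matched:
  assumes "is_matching n \<sigma>" and "i < n"
  shows "partnerQ n \<sigma> (\<sigma> i) = i"
  using assms by (auto simp: is_matching_def partnerQ_def intro: bij_betw_inv_into_left)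

lemma stable_rigid_P_payoff:
  "stable n \<beta> \<gamma> rP rQ u v \<sigma> \<Longrightarrow> i < n \<Longrightarrow> rP i \<Longrightarrow> u i = \<beta> i (\<sigma> i)"
  unfolding stable_def feasible_def by blast

lemma stable_rigid_Q_payoff:
  assumes st: "stable n \<beta> \<gamma> rP rQ u v \<sigma>" and j: "j < n" and "rQ j"
  shows "v j = \<gamma> (partnerQ n \<sigma> j) j"
proof -
  let ?i = "partnerQ n \<sigma> j"
  have "?i < n" and "\<sigma> ?i = j"
    using stable_is_matching[OF st] j by (simp_all add: partnerQ_lt matched_partnerQ)
  then show ?thesis
    using st \<open>rQ j\<close> unfolding stable_def feasible_def by metis
qed

lemma stable_flexible_pair:
  "stable n \<beta> \<gamma> rP rQ u v \<sigma> \<Longrightarrow> i < n \<Longrightarrow> j < n \<Longrightarrow> \<not> rP i \<Longrightarrow> \<not> rQ j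
    \<Longrightarrow> \<beta> i j + \<gamma> i j \<le> u i + v j"
  unfolding stable_def by blast

lemma stable_matched_payoff_ge:
  assumes st: "stable n \<beta> \<gamma> rP rQ u v \<sigma>" and i: "i < n"
  shows "\<beta> i (\<sigma> i) + \<gamma> i (\<sigma> i) \<le> u i + v (\<sigma> i)"
proof -
  have rP: "rP i \<longrightarrow> u i = \<beta> i (\<sigma> i) \<and> (\<not> rQ (\<sigma> i) \<longrightarrow> \<gamma> i (\<sigma> i) \<le> v (\<sigma> i))"
   and rQ: "rQ (\<sigma> i) \<longrightarrow> v (\<sigma> i) = \<gamma> i (\<sigma> i) \<and> (\<not> rP i \<longrightarrow> \<beta> i (\<sigma> i) \<le> u i)"
    using st i unfolding stable_def feasible_def by blast+
  have "\<not> rP i \<Longrightarrow> \<not> rQ (\<sigma> i) \<Longrightarrow> \<beta> i (\<sigma> i) + \<gamma> i (\<sigma> i) \<le> u i + v (\<sigma> i)"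
    using stable_flexible_pair[OF st i] is_matching_lt[OF stable_is_matching[OF st] i] by blast
  with rP rQ show ?thesis by linarith
qed

lemma stable_matched_payoff_eq:
  assumes st: "stable n \<beta> \<gamma> rP rQ u v \<sigma>" and i: "i < n"
  shows "u i + v (\<sigma> i) = \<beta> i (\<sigma> i) + \<gamma> i (\<sigma> i)"
proof -
  define surplus where "surplus k = u k + v (\<sigma> k) - (\<beta> k (\<sigma> k) + \<gamma> k (\<sigma> k))" for k
  have "(\<Sum>j<n. v j) = (\<Sum>k<n. v (\<sigma> k))"
    using sum.reindex_bij_betw[of \<sigma> "{..<n}" "{..<n}" v] stable_is_matching[OF st]
    by (simp add: is_matching_def)
  moreover have "(\<Sum>k<n. u k) + (\<Sum>j<n. v j) = (\<Sum>k<n. \<beta> k (\<sigma> k) + \<gamma> k (\<sigma> k))"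
    using st by (simp add: stable_def feasible_def)
  ultimately have "(\<Sum>k<n. surplus k) = 0"
    by (simp add: surplus_def sum_subtractf sum.distrib)
  moreover have "\<forall>k\<in>{..<n}. 0 \<le> surplus k"
    using stable_matched_payoff_ge[OF st] by (simp add: surplus_def)
  ultimately have "surplus i = 0"
    using i by (metis finite_lessThan lessThan_iff sum_nonneg_eq_0_iff)
  then show ?thesis by (simp add: surplus_def)
qed

lemma nondegenerateD:
  "nondegenerate n \<beta> \<gamma> rP rQ \<Longrightarrow> is_matching n \<sigma> \<Longrightarrow> is_matching n \<sigma>'
    \<Longrightarrow> minimal_forced_both n rP rQ \<sigma> \<sigma>' CP CQ
    \<Longrightarrow> forced_payoff n \<beta> \<gamma> \<sigma> CP CQ = forced_payoff n \<beta> \<gamma> \<sigma>' CP CQ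
    \<Longrightarrow> coincide_on n \<sigma> \<sigma>' CP CQ"
  unfolding nondegenerate_def by blast

lemma minimal_forced_both_rigid_P:
  "i < n \<Longrightarrow> rP i \<Longrightarrow> minimal_forced_both n rP rQ \<sigma> \<sigma>' {i} {}"
  by (auto simp: minimal_forced_both_def coalition_def forced_def subset_singleton_iff)

lemma minimal_forced_both_rigid_Q:
  "j < n \<Longrightarrow> rQ j \<Longrightarrow> minimal_forced_both n rP rQ \<sigma> \<sigma>' {} {j}"
  by (auto simp: minimal_forced_both_def coalition_def forced_def subset_singleton_iff)

lemma nondegenerate_rigid_P_same_partner:
  assumes "nondegenerate n \<beta> \<gamma> rP rQ" "is_matching n \<sigma>" "is_matching n \<sigma>'"
    and "i < n" "rP i" "\<beta> i (\<sigma> i) = \<beta> i (\<sigma>' i)"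
  shows "\<sigma> i = \<sigma>' i"
  using nondegenerateD[OF assms(1-3) minimal_forced_both_rigid_P[where rP = rP and rQ = rQ, OF assms(4,5)]] assms(6)
  by (simp add: forced_payoff_def coincide_on_def)

lemma nondegenerate_rigid_Q_same_partner:
  assumes "nondegenerate n \<beta> \<gamma> rP rQ" "is_matching n \<sigma>" "is_matching n \<sigma>'"
    and "j < n" "rQ j" "\<gamma> (partnerQ n \<sigma> j) j = \<gamma> (partnerQ n \<sigma>' j) j"
  shows "partnerQ n \<sigma> j = partnerQ n \<sigma>' j"
  using nondegenerateD[OF assms(1-3) minimal_forced_both_rigid_Q[where rP = rP and rQ = rQ, OF assms(4,5)]] assms(6)
  by (simp add: forced_payoff_def coincide_on_def)

lemma indifferent_rigid_P_keeps_partner: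
  assumes nd: "nondegenerate n \<beta> \<gamma> rP rQ"
    and st: "stable n \<beta> \<gamma> rP rQ u v \<sigma>" and st': "stable n \<beta> \<gamma> rP rQ u' v' \<sigma>'"
    and i: "i < n" and rigid: "rP i" and "u i = u' i"
  shows "\<sigma>' i = \<sigma> i"
  using nondegenerate_rigid_P_same_partner[OF nd stable_is_matching[OF st] stable_is_matching[OF st'] i rigid]
    stable_rigid_P_payoff[OF st i rigid] stable_rigid_P_payoff[OF st' i rigid] \<open>u i = u' i\<close>
  by simp

lemma indifferent_rigid_Q_keeps_partner:
  assumes nd: "nondegenerate n \<beta> \<gamma> rP rQ"
    and st: "stable n \<beta> \<gamma> rP rQ u v \<sigma>" and st': "stable n \<beta> \<gamma> rP rQ u' v' \<sigma>'"
    and j: "j < n" and rigid: "rQ j" and "v j = v' j"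
  shows "partnerQ n \<sigma>' j = partnerQ n \<sigma> j"
  using nondegenerate_rigid_Q_same_partner[OF nd stable_is_matching[OF st] stable_is_matching[OF st'] j rigid]
    stable_rigid_Q_payoff[OF st j rigid] stable_rigid_Q_payoff[OF st' j rigid] \<open>v j = v' j\<close>
  by simp

theorem lemma2:
  fixes n :: nat and beta gamma :: "nat \<Rightarrow> nat \<Rightarrow> real" and rP rQ :: "nat \<Rightarrow> bool"
    and u v u' v' :: "nat \<Rightarrow> real" and \<sigma> \<sigma>' :: "nat \<Rightarrow> nat" and i j :: nat
  assumes game: "rifle_game n beta gamma"
    and nd: "nondegenerate n beta gamma rP rQ"
    and st: "stable n beta gamma rP rQ u v \<sigma>"
    and st': "stable n beta gamma rP rQ u' v' \<sigma>'"
    and i: "i < n" and matched: "\<sigma> i = j"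
  shows "(u i = u' i \<and> v j > v' j \<longrightarrow> rQ j) \<and> (v j = v' j \<and> u i > u' i \<longrightarrow> rP i)"
proof -
  have j: "j < n" using is_matching_lt[OF stable_is_matching[OF st] i] matched by simp
  have pair_value: "u i + v j = beta i j + gamma i j"
    using stable_matched_payoff_eq[OF st i] matched by simp
  have no_loss: "beta i j + gamma i j \<le> u' i + v' j" if "\<sigma>' i = j \<or> \<not> rP i \<and> \<not> rQ j"
    using that stable_matched_payoff_ge[OF st' i] stable_flexible_pair[OF st' i j] by auto
  have P_indifferent: "\<sigma>' i = j \<or> \<not> rP i \<and> \<not> rQ j" if "u i = u' i" "\<not> rQ j"
    using that indifferent_rigid_P_keeps_partner[OF nd st st' i] matched by blast
  have Q_indifferent: "\<sigma>' i = j \<or> \<not> rP i \<and> \<not> rQ j" if "v j = v' j" "\<not> rP i"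
  proof -
    have "rQ j \<Longrightarrow> partnerQ n \<sigma>' j = i"
      using indifferent_rigid_Q_keeps_partner[OF nd st st' j _ that(1)]
        partnerQ_matched[OF stable_is_matching[OF st] i] matched by simp
    then show ?thesis
      using that matched_partnerQ[OF stable_is_matching[OF st'] j] by blast
  qed
  show ?thesis
    using P_indifferent Q_indifferent no_loss pair_value by fastforce
qed

end
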